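(* Let $\mathbb{K}$ be a field of characteristic zero, let $u,v\in\mathbb{K}$ with $uv\neq0$, and let $f_j=X^{\alpha_j}(uX+v)^{\beta_j}$ for $1\le j\le \ell$, where $\alpha_j,\beta_j$ are integers with $\alpha_j\ge \ell$ and $\beta_j\ge\ell$ for all $j$. If $f_1,\dots,f_\ell$ are linearly independent over $\mathbb{K}$, then \[\operatorname{val}\bigl(W(f_1,\dots,f_\ell)\bigr)\le\sum_{j=1}^\ell\alpha_j.\]
   Context: The Wronskian $W(f_1,\dots,f_\ell)$ is the determinant of the $\ell\times\ell$ matrix whose entry in row $i$ ($0\le i\le\ell-1$) and column $j$ is $f_j^{(i)}$. For a nonzero polynomial $P$, $\operatorname{val}(P)$ is the largest integer $v$ with $X^v\mid P$. *)

theory Defs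
  imports "HOL-Computational_Algebra.Polynomial" "Jordan_Normal_Form.Determinant"
begin

definition wronskian :: "nat \<Rightarrow> (nat \<Rightarrow> 'a::idom poly) \<Rightarrow> 'a poly" where
  "wronskian l f = det (mat l l (\<lambda>(i, j). (pderiv ^^ i) (f j)))"

(* val P = largest v with X^v dividing P (meaningful for P \<noteq> 0) *)
definition val :: "'a::comm_semiring_1 poly \<Rightarrow> nat" where
  "val P = (GREATEST v. (monom 1 1) ^ v dvd P)"

definition lin_indep_polys :: "nat \<Rightarrow> (nat \<Rightarrow> 'a::field poly) \<Rightarrow> bool" where
  "lin_indep_polys l f \<longleftrightarrow>
     (\<forall>c::nat \<Rightarrow> 'a. (\<Sum>j<l. smult (c j) (f j)) = 0 \<longrightarrow> (\<forall>j<l. c j = 0))"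

end

theory Submission
  imports Defs
begin

(*
  The Wronskian W does not vanish: column operations, which preserve W and linear independence,
  make the degrees d_j of the f_j distinct, and then the coefficient of X^(\<Sum>d_j - \<Sum>i) in W is
  the product of the leading coefficients times the determinant of the falling factorials
  d_j (d_j - 1) ... (d_j - i + 1), which is nonsingular like a Vandermonde matrix.

  In the Leibniz expansion of W, the entry f_j^(i) is divisible by (uX + v)^(\<beta>_j - i) and has degree
  at most \<alpha>_j + \<beta>_j - i. Hence (uX + v)^B divides W for B = \<Sum>\<beta>_j - \<Sum>i, and deg W \<le> \<Sum>\<alpha>_j + B.
  As 0 and -v/u are distinct roots, their orders add up to at most deg W, so val W + B \<le> \<Sum>\<alpha>_j + B.
*)

definition falling_poly :: "nat \<Rightarrow> 'a::comm_ring_1 poly" where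
  "falling_poly n = (\<Prod>k<n. [:- of_nat k, 1:])"

lemma poly_falling_poly_Suc:
  "poly (falling_poly (Suc n)) (of_nat (Suc m) :: 'a::comm_ring_1)
     = of_nat (Suc m) * poly (falling_poly n) (of_nat m)"
  unfolding falling_poly_def poly_prod
  by (simp add: prod.lessThan_Suc_shift del: prod.lessThan_Suc)

lemma poly_falling_poly_of_nat_eq_0:
  "m < n \<Longrightarrow> poly (falling_poly n) (of_nat m :: 'a::comm_ring_1) = 0"
  unfolding falling_poly_def poly_prod by (rule prod_zero) auto

lemma falling_poly_nonzero: "falling_poly n \<noteq> (0 :: 'a::idom poly)"
  by (simp add: falling_poly_def)

lemma degree_falling_poly: "degree (falling_poly n :: 'a::idom poly) = n"
  unfolding falling_poly_def by (subst degree_prod_sum_eq) auto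

lemma coeff_higher_pderiv_falling_poly:
  "coeff ((pderiv ^^ n) p) m = coeff p (m + n) * poly (falling_poly n) (of_nat (m + n))"
proof (induction n arbitrary: p)
  case (Suc n)
  have "coeff ((pderiv ^^ Suc n) p) m = coeff (pderiv p) (m + n) * poly (falling_poly n) (of_nat (m + n))"
    using Suc.IH[of "pderiv p"] by (simp add: funpow_Suc_right del: funpow.simps)
  also have "\<dots> = coeff p (m + Suc n) * (of_nat (Suc (m + n)) * poly (falling_poly n) (of_nat (m + n)))"
    by (simp add: coeff_pderiv)
  also have "\<dots> = coeff p (m + Suc n) * poly (falling_poly (Suc n)) (of_nat (m + Suc n))"
    by (simp only: poly_falling_poly_Suc add_Suc_right)
  finally show ?case .
qed (simp add: falling_poly_def)

lemma lead_coeff_higher_pderiv: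
  fixes p :: "'a::{idom,semiring_char_0} poly"
  shows "lead_coeff ((pderiv ^^ n) p) = lead_coeff p * poly (falling_poly n) (of_nat (degree p))"
proof (cases "n \<le> degree p")
  case False
  then show ?thesis
    by (simp add: degree_higher_pderiv coeff_higher_pderiv_falling_poly coeff_eq_0
        poly_falling_poly_of_nat_eq_0)
qed (simp add: degree_higher_pderiv coeff_higher_pderiv_falling_poly)

lemma higher_pderiv_eq_0:
  fixes p :: "'a::{idom,semiring_char_0} poly"
  assumes "degree p < n"
  shows "(pderiv ^^ n) p = 0"
proof -
  have "lead_coeff ((pderiv ^^ n) p) = 0"
    by (simp add: lead_coeff_higher_pderiv poly_falling_poly_of_nat_eq_0[OF assms])
  then show ?thesis by simp
qed

lemma power_dvd_pderiv:
  fixes g :: "'a::{idom,semiring_char_0} poly"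
  assumes "g ^ n dvd p"
  shows "g ^ (n - 1) dvd pderiv p"
proof -
  from assms obtain q where p: "p = g ^ n * q" ..
  have "g ^ (n - 1) dvd g ^ n" by (rule le_imp_power_dvd) simp
  then show ?thesis
    unfolding p pderiv_mult pderiv_power by (intro dvd_add dvd_mult2 dvd_mult dvd_smult dvd_triv_left)
qed

lemma power_dvd_higher_pderiv:
  fixes g :: "'a::{idom,semiring_char_0} poly"
  assumes "g ^ n dvd p"
  shows "g ^ (n - i) dvd (pderiv ^^ i) p"
  using assms by (induction i) (auto dest: power_dvd_pderiv simp: diff_Suc)

lemma coeff_prod_sum_degree:
  fixes f :: "'b \<Rightarrow> 'a::idom poly"
  shows "coeff (prod f A) (\<Sum>x\<in>A. degree (f x)) = (\<Prod>x\<in>A. lead_coeff (f x))"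
proof (cases "\<forall>x\<in>A. f x \<noteq> 0")
  case True
  then show ?thesis by (simp add: lead_coeff_prod flip: degree_prod_sum_eq)
next
  case False
  then obtain x where x: "x \<in> A" "f x = 0" by blast
  show ?thesis
  proof (cases "finite A")
    case True
    with x have "prod f A = 0" "(\<Prod>x\<in>A. lead_coeff (f x)) = 0" by (auto intro: prod_zero)
    then show ?thesis by simp
  qed simp
qed

lemma permutes_lessThan_less: "p permutes {..<n} \<Longrightarrow> i < n \<Longrightarrow> p i < n"
  using permutes_in_image[of p "{..<n}" i] by simp

lemma sum_permutes_diff_ge:
  fixes b :: "nat \<Rightarrow> nat"
  assumes "p permutes {..<l}"
  shows "(\<Sum>j<l. b j) - (\<Sum>i<l. i) \<le> (\<Sum>i<l. b (p i) - i)"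
proof -
  have "(\<Sum>j<l. b j) = (\<Sum>i<l. b (p i))"
    using sum.permute[OF assms, of b] by (simp add: comp_def)
  also have "\<dots> \<le> (\<Sum>i<l. (b (p i) - i) + i)" by (intro sum_mono) simp
  finally show ?thesis by (simp add: sum.distrib)
qed

lemma sum_permutes_diff_eq:
  fixes b :: "nat \<Rightarrow> nat"
  assumes "p permutes {..<l}" "\<And>i. i < l \<Longrightarrow> i \<le> b (p i)"
  shows "(\<Sum>i<l. b (p i) - i) = (\<Sum>j<l. b j) - (\<Sum>i<l. i)"
proof -
  have "(\<Sum>i<l. b (p i) - i) = (\<Sum>i<l. b (p i)) - (\<Sum>i<l. i)"
    using assms(2) by (intro sum_subtractf_nat) simp
  also have "(\<Sum>i<l. b (p i)) = (\<Sum>j<l. b j)"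
    using sum.permute[OF assms(1), of b] by (simp add: comp_def)
  finally show ?thesis .
qed

lemma wronskian_expand:
  "wronskian l f = (\<Sum>p | p permutes {..<l}. signof p * (\<Prod>i<l. (pderiv ^^ i) (f (p i))))"
proof -
  have "(\<Prod>i<l. mat l l (\<lambda>(i, j). (pderiv ^^ i) (f j)) $$ (i, p i)) = (\<Prod>i<l. (pderiv ^^ i) (f (p i)))"
    if "p permutes {..<l}" for p
    using that by (intro prod.cong) (auto simp: permutes_lessThan_less)
  then show ?thesis
    unfolding wronskian_def det_def'[OF mat_carrier] atLeast0LessThan by (intro sum.cong) simp_all
qed

lemma degree_wronskian_le:
  fixes f :: "nat \<Rightarrow> 'a::{idom,semiring_char_0} poly"
  shows "degree (wronskian l f) \<le> (\<Sum>j<l. degree (f j)) - (\<Sum>i<l. i)"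
  unfolding wronskian_expand
proof (intro degree_sum_le)
  fix p assume "p \<in> {p. p permutes {..<l}}"
  then have p: "p permutes {..<l}" by simp
  have "degree (\<Prod>i<l. (pderiv ^^ i) (f (p i))) \<le> (\<Sum>j<l. degree (f j)) - (\<Sum>i<l. i)"
  proof (cases "\<forall>i<l. i \<le> degree (f (p i))")
    case True
    have "degree (\<Prod>i<l. (pderiv ^^ i) (f (p i))) \<le> (\<Sum>i<l. degree (f (p i)) - i)"
      using degree_prod_sum_le[of "{..<l}" "\<lambda>i. (pderiv ^^ i) (f (p i))"]
      by (simp add: comp_def degree_higher_pderiv)
    also have "\<dots> = (\<Sum>j<l. degree (f j)) - (\<Sum>i<l. i)"
      using p True by (intro sum_permutes_diff_eq) auto
    finally show ?thesis .
  next
    case False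
    then obtain i where "i < l" "degree (f (p i)) < i" by auto
    then have "(\<Prod>i<l. (pderiv ^^ i) (f (p i))) = 0"
      by (intro prod_zero bexI[of _ i]) (auto intro: higher_pderiv_eq_0)
    then show ?thesis by (simp del: prod_zero_iff)
  qed
  then show "degree (signof p * (\<Prod>i<l. (pderiv ^^ i) (f (p i)))) \<le> (\<Sum>j<l. degree (f j)) - (\<Sum>i<l. i)"
    by (simp add: of_int_poly)
qed (simp add: finite_permutations)

lemma power_dvd_wronskian:
  fixes f :: "nat \<Rightarrow> 'a::{idom,semiring_char_0} poly"
  assumes "\<And>j. j < l \<Longrightarrow> g ^ b j dvd f j"
  shows "g ^ ((\<Sum>j<l. b j) - (\<Sum>i<l. i)) dvd wronskian l f"
  unfolding wronskian_expand
proof (intro dvd_sum dvd_mult)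
  fix p assume "p \<in> {p. p permutes {..<l}}"
  then have p: "p permutes {..<l}" by simp
  have "g ^ ((\<Sum>j<l. b j) - (\<Sum>i<l. i)) dvd g ^ (\<Sum>i<l. b (p i) - i)"
    using sum_permutes_diff_ge[OF p] by (rule le_imp_power_dvd)
  also have "\<dots> = (\<Prod>i<l. g ^ (b (p i) - i))" by (rule power_sum)
  also have "\<dots> dvd (\<Prod>i<l. (pderiv ^^ i) (f (p i)))"
    using p by (intro prod_dvd_prod power_dvd_higher_pderiv assms) (auto simp: permutes_lessThan_less)
  finally show "g ^ ((\<Sum>j<l. b j) - (\<Sum>i<l. i)) dvd (\<Prod>i<l. (pderiv ^^ i) (f (p i)))" .
qed

lemma coeff_wronskian_sum_degree:
  fixes h :: "nat \<Rightarrow> 'a::{idom,ring_char_0} poly"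
  shows "coeff (wronskian l h) ((\<Sum>j<l. degree (h j)) - (\<Sum>i<l. i))
     = (\<Prod>j<l. lead_coeff (h j)) * det (mat l l (\<lambda>(i, j). poly (falling_poly i) (of_nat (degree (h j)))))"
proof -
  let ?N = "(\<Sum>j<l. degree (h j)) - (\<Sum>i<l. i)"
  have summand: "coeff (\<Prod>i<l. (pderiv ^^ i) (h (p i))) ?N
      = (\<Prod>j<l. lead_coeff (h j)) * (\<Prod>i<l. poly (falling_poly i) (of_nat (degree (h (p i)))))"
    if p: "p permutes {..<l}" for p
  proof (cases "\<forall>i<l. i \<le> degree (h (p i))")
    case True
    have "?N = (\<Sum>i<l. degree ((pderiv ^^ i) (h (p i))))"
      using sum_permutes_diff_eq[OF p, of "\<lambda>j. degree (h j)"] True by (simp add: degree_higher_pderiv)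
    then have "coeff (\<Prod>i<l. (pderiv ^^ i) (h (p i))) ?N
        = (\<Prod>i<l. lead_coeff (h (p i)) * poly (falling_poly i) (of_nat (degree (h (p i)))))"
      by (simp add: coeff_prod_sum_degree lead_coeff_higher_pderiv)
    also have "\<dots> = (\<Prod>j<l. lead_coeff (h j)) * (\<Prod>i<l. poly (falling_poly i) (of_nat (degree (h (p i)))))"
      using prod.permute[OF p, of "\<lambda>j. lead_coeff (h j)"] by (simp add: prod.distrib comp_def)
    finally show ?thesis .
  next
    case False
    then obtain i where i: "i < l" "degree (h (p i)) < i" by auto
    then have "(\<Prod>i<l. (pderiv ^^ i) (h (p i))) = 0"
      by (intro prod_zero bexI[of _ i]) (auto intro: higher_pderiv_eq_0)
    moreover from i have "(\<Prod>i<l. poly (falling_poly i) (of_nat (degree (h (p i)))) :: 'a) = 0"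
      by (intro prod_zero bexI[of _ i]) (auto intro: poly_falling_poly_of_nat_eq_0)
    ultimately show ?thesis by (simp del: prod_zero_iff)
  qed
  have entries: "(\<Prod>i<l. mat l l (\<lambda>(i, j). poly (falling_poly i) (of_nat (degree (h j)))) $$ (i, p i))
      = (\<Prod>i<l. poly (falling_poly i) (of_nat (degree (h (p i)))) :: 'a)" if "p permutes {..<l}" for p
    using that by (intro prod.cong) (auto simp: permutes_lessThan_less)
  show ?thesis
    unfolding wronskian_expand det_def'[OF mat_carrier] atLeast0LessThan coeff_sum sum_distrib_left
    by (intro sum.cong refl) (simp add: of_int_poly summand entries)
qed

lemma lin_indep_polys_nonzero:
  assumes "lin_indep_polys l f" "j < l"
  shows "f j \<noteq> 0"
proof
  assume "f j = 0"
  then have "(\<Sum>i<l. smult (if i = j then 1 else 0) (f i)) = 0"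
    by (intro sum.neutral) simp
  from assms(1)[unfolded lin_indep_polys_def, rule_format, OF this assms(2)] show False by simp
qed

lemma lin_indep_polys_degree_eq_index:
  fixes P :: "nat \<Rightarrow> 'a::field poly"
  assumes "\<And>i. i < l \<Longrightarrow> P i \<noteq> 0" "\<And>i. i < l \<Longrightarrow> degree (P i) = i"
  shows "lin_indep_polys l P"
  using assms
proof (induction l)
  case (Suc l)
  show ?case
    unfolding lin_indep_polys_def
  proof (rule allI, rule impI)
    fix c :: "nat \<Rightarrow> 'a"
    assume sum_eq_0: "(\<Sum>j<Suc l. smult (c j) (P j)) = 0"
    have "coeff (\<Sum>j<l. smult (c j) (P j)) l = 0"
      using Suc.prems(2) by (simp add: coeff_sum coeff_eq_0)
    then have "c l * lead_coeff (P l) = 0"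
      using arg_cong[OF sum_eq_0, of "\<lambda>q. coeff q l"] Suc.prems(2) by simp
    then have "c l = 0" using Suc.prems(1) by simp
    with sum_eq_0 have "(\<Sum>j<l. smult (c j) (P j)) = 0" by simp
    then have "\<forall>j<l. c j = 0" using Suc.IH Suc.prems unfolding lin_indep_polys_def by simp
    with \<open>c l = 0\<close> show "\<forall>j<Suc l. c j = 0" using less_Suc_eq by blast
  qed
qed (simp add: lin_indep_polys_def)

lemma lin_indep_polys_add_smult_column:
  fixes f :: "nat \<Rightarrow> 'a::field poly"
  assumes "lin_indep_polys l f" "k \<noteq> m" "k < l" "m < l"
  shows "lin_indep_polys l (f(m := f m + smult a (f k)))"
  unfolding lin_indep_polys_def
proof (rule allI, rule impI)
  fix c :: "nat \<Rightarrow> 'a"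
  assume sum_eq_0: "(\<Sum>j<l. smult (c j) ((f(m := f m + smult a (f k))) j)) = 0"
  define c' where "c' = c(k := c k + c m * a)"
  have "(\<Sum>j<l. smult (c' j) (f j)) = (\<Sum>j<l. smult (c j) ((f(m := f m + smult a (f k))) j))"
    using assms(2-4)
    by (simp add: c'_def sum.If_cases lessThan_def Collect_conj_eq[symmetric] smult_add_left
        smult_add_right fun_upd_def sum.remove[of _ k] sum.remove[of _ m])
  then have c'_eq_0: "\<forall>j<l. c' j = 0" using assms(1) sum_eq_0 unfolding lin_indep_polys_def by simp
  then have "c m = 0" using assms(2,4) unfolding c'_def by (metis fun_upd_other)
  with c'_eq_0 show "\<forall>j<l. c j = 0" by (simp add: c'_def)
qed

lemma wronskian_add_smult_column:
  assumes "k \<noteq> m" "k < l" "m < l"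
  shows "wronskian l (f(m := f m + smult a (f k))) = wronskian l f"
proof -
  let ?M = "mat l l (\<lambda>(i, j). (pderiv ^^ i) (f j))"
  have "mat l l (\<lambda>(i, j). (pderiv ^^ i) ((f(m := f m + smult a (f k))) j)) = addcol [:a:] m k ?M"
    using assms by (intro eq_matI) (auto simp: mat_addcol_def higher_pderiv_add higher_pderiv_smult)
  then show ?thesis
    unfolding wronskian_def using assms by simp
qed

lemma column_reduce_distinct_degrees_step:
  fixes f :: "nat \<Rightarrow> 'a::field poly"
  assumes "lin_indep_polys l f" "m < l" "inj_on (\<lambda>j. degree (f j)) {..<m}"
  shows "\<exists>h. lin_indep_polys l h \<and> wronskian l h = wronskian l f
    \<and> inj_on (\<lambda>j. degree (h j)) {..<Suc m}"
  using assms
proof (induction "degree (f m)" arbitrary: f rule: less_induct)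
  case less
  show ?case
  proof (cases "degree (f m) \<in> (\<lambda>j. degree (f j)) ` {..<m}")
    case False
    then have "inj_on (\<lambda>j. degree (f j)) {..<Suc m}"
      using less.prems(3) by (simp add: lessThan_Suc)
    then show ?thesis using less.prems(1) by blast
  next
    case True
    then obtain k where k: "k < m" "degree (f k) = degree (f m)" by auto
    define c where "c = - lead_coeff (f m) / lead_coeff (f k)"
    define g where "g = f(m := f m + smult c (f k))"
    have g: "lin_indep_polys l g" "wronskian l g = wronskian l f"
      using k less.prems by (simp_all add: g_def lin_indep_polys_add_smult_column wronskian_add_smult_column)
    have "inj_on (\<lambda>j. degree (g j)) {..<m}"
      using less.prems(3) by (rule inj_on_cong[THEN iffD1, rotated]) (simp add: g_def)
    moreover have "degree (g m) < degree (f m)"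
    proof -
      have "f k \<noteq> 0" using lin_indep_polys_nonzero[OF less.prems(1)] k less.prems(2) by simp
      then have "lead_coeff (f k) \<noteq> 0" by simp
      have "coeff (g m) (degree (f m)) = lead_coeff (f m) + c * lead_coeff (f k)"
        using k(2) by (simp add: g_def)
      also have "\<dots> = 0" using \<open>lead_coeff (f k) \<noteq> 0\<close> by (simp add: c_def)
      finally have "coeff (g m) (degree (f m)) = 0" .
      moreover have "degree (g m) \<le> degree (f m)"
        using k by (simp add: g_def degree_add_le)
      moreover have "g m \<noteq> 0" using lin_indep_polys_nonzero[OF g(1) less.prems(2)] .
      ultimately show ?thesis using leading_coeff_0_iff le_neq_implies_less by metis
    qed
    ultimately show ?thesis
      using less.hyps[OF _ g(1) less.prems(2)] unfolding g(2) by blast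
  qed
qed

lemma column_reduce_distinct_degrees:
  fixes f :: "nat \<Rightarrow> 'a::field poly"
  assumes "lin_indep_polys l f"
  obtains h where "lin_indep_polys l h" "wronskian l h = wronskian l f"
    "inj_on (\<lambda>j. degree (h j)) {..<l}"
proof -
  have "\<exists>h. lin_indep_polys l h \<and> wronskian l h = wronskian l f
      \<and> inj_on (\<lambda>j. degree (h j)) {..<m}" if "m \<le> l" for m
    using that
  proof (induction m)
    case (Suc m)
    then obtain h where "lin_indep_polys l h" "wronskian l h = wronskian l f"
      "inj_on (\<lambda>j. degree (h j)) {..<m}" by auto
    with column_reduce_distinct_degrees_step[of l h m] Suc.prems show ?case by auto
  qed (use assms in auto)
  with that show ?thesis by blast
qed

lemma det_poly_eval_nonzero:
  fixes P :: "nat \<Rightarrow> 'a::field poly" and x :: "nat \<Rightarrow> 'a"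
  assumes "\<And>i. i < l \<Longrightarrow> P i \<noteq> 0" "\<And>i. i < l \<Longrightarrow> degree (P i) = i"
    and "inj_on x {..<l}"
  shows "det (mat l l (\<lambda>(i, j). poly (P i) (x j))) \<noteq> 0"
proof
  let ?F = "mat l l (\<lambda>(i, j). poly (P i) (x j))"
  assume "det ?F = 0"
  then have "det (transpose_mat ?F) = 0" using det_transpose[of ?F l] by simp
  then obtain c where c: "c \<in> carrier_vec l" "c \<noteq> 0\<^sub>v l" "transpose_mat ?F *\<^sub>v c = 0\<^sub>v l"
    using det_0_iff_vec_prod_zero_field[of "transpose_mat ?F" l] by auto
  define Q where "Q = (\<Sum>i<l. smult (c $ i) (P i))"
  have "l > 0" using c(1,2) by (cases l) auto
  have "poly Q (x j) = 0" if "j < l" for j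
  proof -
    have "(transpose_mat ?F *\<^sub>v c) $ j = 0" using c(3) that by simp
    then show ?thesis
      using that c(1) by (simp add: Q_def poly_sum scalar_prod_def atLeast0LessThan mult.commute)
  qed
  moreover have "degree Q < l"
    using \<open>l > 0\<close> assms(2) unfolding Q_def
    by (intro le_less_trans[OF degree_sum_le[of _ _ "l - 1"]]) (auto intro: order.trans[OF degree_smult_le])
  moreover have "card (x ` {..<l}) = l" using assms(3) by (simp add: card_image)
  ultimately have "Q = 0" using \<open>l > 0\<close> by (intro poly_eqI_degree[of "x ` {..<l}"]) auto
  then have "\<forall>i<l. c $ i = 0"
    using lin_indep_polys_degree_eq_index[OF assms(1,2)] unfolding lin_indep_polys_def Q_def by blast
  then have "c = 0\<^sub>v l" using c(1) by (intro eq_vecI) auto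
  with c(2) show False ..
qed

lemma wronskian_nonzero_if_distinct_degrees:
  fixes h :: "nat \<Rightarrow> 'a::field_char_0 poly"
  assumes "\<And>j. j < l \<Longrightarrow> h j \<noteq> 0" "inj_on (\<lambda>j. degree (h j)) {..<l}"
  shows "wronskian l h \<noteq> 0"
proof -
  have "det (mat l l (\<lambda>(i, j). poly (falling_poly i) (of_nat (degree (h j)) :: 'a))) \<noteq> 0"
    using assms(2)
    by (intro det_poly_eval_nonzero) (auto simp: degree_falling_poly falling_poly_nonzero inj_on_def)
  moreover have "(\<Prod>j<l. lead_coeff (h j)) \<noteq> 0" using assms(1) by simp
  ultimately have "coeff (wronskian l h) ((\<Sum>j<l. degree (h j)) - (\<Sum>i<l. i)) \<noteq> 0"
    by (simp add: coeff_wronskian_sum_degree)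
  then show ?thesis by auto
qed

lemma wronskian_nonzero:
  fixes f :: "nat \<Rightarrow> 'a::field_char_0 poly"
  assumes "lin_indep_polys l f"
  shows "wronskian l f \<noteq> 0"
proof -
  obtain h where h: "lin_indep_polys l h" "wronskian l h = wronskian l f"
    "inj_on (\<lambda>j. degree (h j)) {..<l}"
    using column_reduce_distinct_degrees[OF assms] .
  then show ?thesis
    using wronskian_nonzero_if_distinct_degrees[of l h] lin_indep_polys_nonzero[OF h(1)] by simp
qed

lemma val_eq_order_0:
  fixes P :: "'a::idom poly"
  assumes "P \<noteq> 0"
  shows "val P = order 0 P"
proof -
  have "monom 1 1 ^ v dvd P \<longleftrightarrow> v \<le> order 0 P" for v
    using assms order_divides[of 0 v P] by (simp add: monom_altdef)
  then show ?thesis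
    unfolding val_def by (intro Greatest_equality) auto
qed

lemma order_add_order_le_degree:
  fixes p :: "'a::idom poly"
  assumes "p \<noteq> 0" "a \<noteq> b"
  shows "order a p + order b p \<le> degree p"
proof -
  obtain q where q: "p = [:- a, 1:] ^ order a p * q"
    using order_decomp[OF assms(1)] by blast
  with assms(1) have "q \<noteq> 0" by auto
  have "order b ([:- a, 1:] ^ order a p) = 0"
    using assms(2) by (intro order_0I) simp
  then have "order b p = order b q"
    using order_mult[of "[:- a, 1:] ^ order a p" q b] assms(1) q by simp
  also have "\<dots> \<le> degree q" using \<open>q \<noteq> 0\<close> by (rule order_degree)
  also have "order a p + degree q = degree p"
    using \<open>q \<noteq> 0\<close> by (subst (2) q) (simp add: degree_mult_eq degree_power_eq)
  finally show ?thesis by simp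
qed

theorem lemma2p5:
  fixes u v :: "'a::field_char_0" and l :: nat
    and \<alpha> \<beta> :: "nat \<Rightarrow> nat" and f :: "nat \<Rightarrow> 'a poly"
  assumes "u * v \<noteq> 0"
    and "\<And>j. j < l \<Longrightarrow> \<alpha> j \<ge> l \<and> \<beta> j \<ge> l"
    and "\<And>j. j < l \<Longrightarrow> f j = monom 1 (\<alpha> j) * [:v, u:] ^ (\<beta> j)"
    and "lin_indep_polys l f"
  shows "val (wronskian l f) \<le> (\<Sum>j<l. \<alpha> j)"
proof -
  define W where "W = wronskian l f"
  define B where "B = (\<Sum>j<l. \<beta> j) - (\<Sum>i<l. i)"
  define r where "r = - v / u"
  have "u \<noteq> 0" "r \<noteq> 0" using assms(1) by (auto simp: r_def)
  have "W \<noteq> 0" unfolding W_def using assms(4) by (rule wronskian_nonzero)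
  have linear_factor: "[:v, u:] = smult u [:- r, 1:]" using \<open>u \<noteq> 0\<close> by (simp add: r_def)
  have "[:- r, 1:] ^ \<beta> j dvd f j" if "j < l" for j
    unfolding assms(3)[OF that] linear_factor smult_power by (intro dvd_mult dvd_smult) simp
  then have "[:- r, 1:] ^ B dvd W"
    unfolding W_def B_def by (rule power_dvd_wronskian)
  then have "B \<le> order r W" using \<open>W \<noteq> 0\<close> by (simp add: order_divides)
  then have "val W + B \<le> degree W"
    using order_add_order_le_degree[OF \<open>W \<noteq> 0\<close> \<open>r \<noteq> 0\<close>[symmetric]] val_eq_order_0[OF \<open>W \<noteq> 0\<close>]
    by simp
  also have "degree W \<le> (\<Sum>j<l. \<alpha> j + \<beta> j) - (\<Sum>i<l. i)"
    using degree_wronskian_le[of l f] \<open>u \<noteq> 0\<close> assms(3)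
    by (simp add: W_def degree_mult_eq degree_power_eq degree_monom_eq)
  also have "\<dots> \<le> (\<Sum>j<l. \<alpha> j) + B" by (simp add: B_def sum.distrib)
  finally show ?thesis by (simp add: W_def)
qed

end
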